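(* Let $k\ge1$ and let $C_1,\dots,C_t$ be any symmetric chain decomposition of $B_k$ (identified with $\{0,1\}^k$), listed in order of non-increasing length. Define a total order $\preccurlyeq$ on $B_k$ by $\mathbf b\preccurlyeq\mathbf b'$ iff $\mathbf b\in C_i$, $\mathbf b'\in C_j$ with $i<j$, or $\mathbf b,\mathbf b'$ lie in the same $C_i$ and $\mathbf b\subseteq\mathbf b'$. Let $P=\bigcup_{1\le i\le j\le t}P_{ij}$ where $P_{ij}=C_i\times C_j$ for $i<j$ and $P_{ii}=\{(\mathbf b,\mathbf b')\in C_i\times C_i:\mathbf b\subseteq\mathbf b'\}$, and identify $(\mathbf b,\mathbf b')\in P$ with the concatenated string $\mathbf b\mathbf b'^{\,r}\in B_{2k}$ ($\mathbf b'^{\,r}$ the reverse of $\mathbf b'$), with the induced inclusion order. Then $P$ can be partitioned into chains each of which is a saturated chain $x_1<\dots<x_\ell$ in $B_{2k}$ with $|x_1|+|x_\ell|=2k$; and the map $(\mathbf b,\mathbf b')\mapsto\{\mathbf b\mathbf b'^{\,r},\mathbf b'\mathbf b^{\,r}\}$ is an order-preserving bijection from $P$ onto $B_{2k}/G$, where $G=\{1,\rho\}$ with $\rho=(1\;2k)(2\;2k{-}1)\cdots(k\;k{+}1)$.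
   Context: $B_k$ is the Boolean lattice of subsets of $[k]$, identified with binary strings of length $k$. A symmetric chain decomposition of a ranked poset is a partition into saturated chains $x_1<\dots<x_\ell$ with $r(x_1)+r(x_\ell)$ equal to the rank of the poset. For $G\le S_{2k}$, $B_{2k}/G$ is the poset of $G$-orbits $[A]$ ordered by $[A]\le[B]$ iff $X\subseteq Y$ for some $X\in[A]$, $Y\in[B]$. *)

theory Defs
  imports Main
begin

text \<open>Elements of B_n are binary strings (bool lists) of length n; position i holds True
  iff the element i (0-indexed) belongs to the subset.\<close>

definition Bk :: "nat \<Rightarrow> bool list set" where
  "Bk n = {x. length x = n}"

definition subs :: "bool list \<Rightarrow> bool list \<Rightarrow> bool" where
  "subs x y \<longleftrightarrow> length x = length y \<and> (\<forall>i<length x. x ! i \<longrightarrow> y ! i)"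

definition wt :: "bool list \<Rightarrow> nat" where
  "wt x = length (filter id x)"

definition sat_chain :: "nat \<Rightarrow> bool list list \<Rightarrow> bool" where
  "sat_chain n D \<longleftrightarrow> D \<noteq> [] \<and> set D \<subseteq> Bk n \<and>
     (\<forall>i. Suc i < length D \<longrightarrow> subs (D ! i) (D ! Suc i) \<and> wt (D ! Suc i) = wt (D ! i) + 1)"

definition sym_chain :: "nat \<Rightarrow> bool list list \<Rightarrow> bool" where
  "sym_chain n D \<longleftrightarrow> sat_chain n D \<and> wt (hd D) + wt (last D) = n"

definition is_scd :: "nat \<Rightarrow> bool list list list \<Rightarrow> bool" where
  "is_scd n Cs \<longleftrightarrow> (\<forall>C\<in>set Cs. sym_chain n C) \<and>
     (\<forall>x\<in>Bk n. \<exists>!(i, j). i < length Cs \<and> j < length (Cs ! i) \<and> Cs ! i ! j = x)"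

definition prec :: "bool list list list \<Rightarrow> bool list \<Rightarrow> bool list \<Rightarrow> bool" where
  "prec Cs b b' \<longleftrightarrow>
     (\<exists>i j. i < j \<and> j < length Cs \<and> b \<in> set (Cs ! i) \<and> b' \<in> set (Cs ! j)) \<or>
     (\<exists>i<length Cs. b \<in> set (Cs ! i) \<and> b' \<in> set (Cs ! i) \<and> subs b b')"

definition Pblock :: "bool list list list \<Rightarrow> nat \<Rightarrow> nat \<Rightarrow> (bool list \<times> bool list) set" where
  "Pblock Cs i j = (if i < j then set (Cs ! i) \<times> set (Cs ! j)
                    else {(b, b'). b \<in> set (Cs ! i) \<and> b' \<in> set (Cs ! i) \<and> subs b b'})"

definition Pset :: "bool list list list \<Rightarrow> (bool list \<times> bool list) set" where
  "Pset Cs = (\<Union>j\<in>{0..<length Cs}. \<Union>i\<in>{0..j}. Pblock Cs i j)"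

definition emb :: "bool list \<times> bool list \<Rightarrow> bool list" where
  "emb p = fst p @ rev (snd p)"

text \<open>Action of a permutation sigma of {0..<n} on strings of length n (A maps to sigma ` A).\<close>
definition act :: "(nat \<Rightarrow> nat) \<Rightarrow> bool list \<Rightarrow> bool list" where
  "act \<sigma> x = map (\<lambda>i. \<exists>j<length x. x ! j \<and> \<sigma> j = i) [0..<length x]"

definition orbit :: "(nat \<Rightarrow> nat) set \<Rightarrow> bool list \<Rightarrow> bool list set" where
  "orbit G x = (\<lambda>\<sigma>. act \<sigma> x) ` G"

definition quot :: "nat \<Rightarrow> (nat \<Rightarrow> nat) set \<Rightarrow> bool list set set" where
  "quot n G = orbit G ` Bk n"

definition orb_le :: "bool list set \<Rightarrow> bool list set \<Rightarrow> bool" where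
  "orb_le A B \<longleftrightarrow> (\<exists>X\<in>A. \<exists>Y\<in>B. subs X Y)"

text \<open>rho = (1 2k)(2 2k-1)...(k k+1), written 0-indexed on {0..<n} with n = 2k.\<close>
definition rho :: "nat \<Rightarrow> nat \<Rightarrow> nat" where
  "rho n i = (if i < n then n - 1 - i else i)"

definition Gk :: "nat \<Rightarrow> (nat \<Rightarrow> nat) set" where
  "Gk k = {id, rho (2 * k)}"

end

theory Submission imports Defs begin

(* Let m_i be the length of the chain C_i of the decomposition; positions inside
   the chains turn P into the union of the rectangles [m_i] x [m_j] (i < j, so m_j <= m_i) and
   the triangles {x <= y} of [m_i] x [m_i].
   - A rectangle m x n with n <= m is partitioned into hooks: hook s starts at (0, s), runs in
     x up to (m-1-s, s) and then in y up to (m-1-s, n-1).  A triangle of side m is partitioned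
     into hooks from (s, s) up to (s, m-1-s) and then across to (m-1-s, m-1-s).  Every hook
     moves by unit steps, and the coordinate sums of its two ends add up to m + n - 2.
   - Following a unit-step path through positions of two symmetric chains A, B yields a
     saturated chain of concatenations a b'^r; the end condition makes it symmetric
     (sym_chain_along_path).  This gives the symmetric chain partition of P.
   - The G-orbits are exactly the sets {x, rev x}.  For b, b' of length k, at least one of
     (b, b'), (b', b) lies in P and both only if b = b', so (b, b') |-> {b b'^r, b' b^r} is a
     bijection onto B_2k/G (pair_orbit_bij); it preserves order by definition of orb_le. *)

lemma wt_append [simp]: "wt (a @ b) = wt a + wt b"
  by (simp add: wt_def)

lemma wt_rev [simp]: "wt (rev a) = wt a"
  by (simp add: wt_def rev_filter[symmetric])

lemma subs_wt: "subs a b \<Longrightarrow> wt a \<le> wt b"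
  unfolding subs_def wt_def length_filter_conv_card by (intro card_mono) auto

lemma subs_refl: "subs a a"
  by (simp add: subs_def)

lemma subs_trans: "subs a b \<Longrightarrow> subs b c \<Longrightarrow> subs a c"
  by (simp add: subs_def)

lemma subs_emb: "subs a c \<Longrightarrow> subs b d \<Longrightarrow> subs (emb (a, b)) (emb (c, d))"
  by (auto simp: subs_def emb_def nth_append rev_nth)

lemma sat_chain_length: "sat_chain n D \<Longrightarrow> x < length D \<Longrightarrow> length (D ! x) = n"
  by (auto simp: sat_chain_def Bk_def dest!: nth_mem)

lemma sat_chain_wt: "sat_chain n D \<Longrightarrow> u < length D \<Longrightarrow> wt (D ! u) = wt (D ! 0) + u"
  by (induction u) (auto simp: sat_chain_def)

lemma sat_chain_subs:
  assumes D: "sat_chain n D" shows "x \<le> y \<Longrightarrow> y < length D \<Longrightarrow> subs (D ! x) (D ! y)"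
proof (induction y)
  case 0 then show ?case by (simp add: subs_refl)
next
  case (Suc y)
  show ?case
  proof (cases "x = Suc y")
    case False
    then have "subs (D ! x) (D ! y)" using Suc by simp
    then show ?thesis using D Suc.prems subs_trans unfolding sat_chain_def by blast
  qed (simp add: subs_refl)
qed

lemma sat_chain_distinct: "sat_chain n D \<Longrightarrow> distinct D"
  unfolding distinct_conv_nth by (metis sat_chain_wt add_left_cancel)

lemma sym_chain_bottom:
  assumes "sym_chain n D" shows "2 * wt (D ! 0) + length D = Suc n"
proof -
  have D: "sat_chain n D" "D \<noteq> []" using assms by (auto simp: sym_chain_def sat_chain_def)
  have "wt (last D) = wt (D ! 0) + (length D - 1)"
    using D sat_chain_wt[OF D(1), of "length D - 1"] by (simp add: last_conv_nth)
  moreover have "wt (D ! 0) + wt (last D) = n"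
    using assms D(2) by (simp add: sym_chain_def hd_conv_nth)
  moreover have "length D > 0" using D(2) by simp
  ultimately show ?thesis by linarith
qed

section \<open>Chains of pairs along unit-step paths\<close>

definition unit_path :: "nat \<Rightarrow> (nat \<Rightarrow> nat \<times> nat) \<Rightarrow> bool" where
  "unit_path L g \<longleftrightarrow> (\<forall>u. Suc u < L \<longrightarrow>
     g (Suc u) = (Suc (fst (g u)), snd (g u)) \<or> g (Suc u) = (fst (g u), Suc (snd (g u))))"

lemma sym_chain_along_path:
  assumes A: "sym_chain a A" and B: "sym_chain b B" and L: "L > 0" and g: "unit_path L g"
    and inside: "\<And>u. u < L \<Longrightarrow> fst (g u) < length A \<and> snd (g u) < length B"
    and ends: "fst (g 0) + snd (g 0) + fst (g (L - 1)) + snd (g (L - 1)) + 2 = length A + length B"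
  shows "sym_chain (a + b) (map (\<lambda>u. emb (A ! fst (g u), B ! snd (g u))) [0..<L])"
proof -
  have sA: "sat_chain a A" and sB: "sat_chain b B" using A B by (auto simp: sym_chain_def)
  define f where "f u = emb (A ! fst (g u), B ! snd (g u))" for u
  have len: "length (f u) = a + b" if "u < L" for u
    using inside[OF that] sat_chain_length[OF sA] sat_chain_length[OF sB] by (simp add: f_def emb_def)
  have wt_f: "wt (f u) = wt (A ! 0) + wt (B ! 0) + fst (g u) + snd (g u)" if "u < L" for u
    using inside[OF that] sat_chain_wt[OF sA] sat_chain_wt[OF sB] by (simp add: f_def emb_def)
  have step: "subs (f u) (f (Suc u)) \<and> wt (f (Suc u)) = wt (f u) + 1" if u: "Suc u < L" for u
  proof -
    have "subs (A ! fst (g u)) (A ! fst (g (Suc u))) \<and> subs (B ! snd (g u)) (B ! snd (g (Suc u)))"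
      using g u inside[of u] inside[of "Suc u"] sat_chain_subs[OF sA] sat_chain_subs[OF sB]
      unfolding unit_path_def by (metis Suc_lessD fst_conv snd_conv le_refl le_SucI)
    then have "subs (f u) (f (Suc u))" by (simp add: f_def subs_emb)
    moreover have "wt (f (Suc u)) = wt (f u) + 1"
      using g u wt_f[of u] wt_f[of "Suc u"] unfolding unit_path_def by auto
    ultimately show ?thesis ..
  qed
  have "2 * wt (A ! 0) + length A = Suc a" "2 * wt (B ! 0) + length B = Suc b"
    using sym_chain_bottom A B by auto
  then have "wt (f 0) + wt (f (L - 1)) = a + b" using wt_f L ends by simp
  then show ?thesis using L len step
    by (simp add: f_def[symmetric] sym_chain_def sat_chain_def Bk_def hd_conv_nth last_conv_nth
        image_subset_iff)
qed

section \<open>Hook decompositions of rectangles and triangles\<close>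

text \<open>Hook s of the rectangle [m] x [n] (n \<le> m): from (0, s) along x to (m-1-s, s), then along
  y to (m-1-s, n-1).  The point (x, y) lies on hook rhook_level m x y.\<close>
definition rhook :: "nat \<Rightarrow> nat \<Rightarrow> nat \<Rightarrow> nat \<times> nat" where
  "rhook m s u = (if u < m - s then (u, s) else (m - 1 - s, u - (m - s) + s + 1))"

definition rhook_len :: "nat \<Rightarrow> nat \<Rightarrow> nat \<Rightarrow> nat" where
  "rhook_len m n s = m + n - 1 - 2 * s"

definition rhook_level :: "nat \<Rightarrow> nat \<Rightarrow> nat \<Rightarrow> nat" where
  "rhook_level m x y = min y (m - 1 - x)"

lemma rhook_unit_path: "unit_path (rhook_len m n s) (rhook m s)"
  by (auto simp: unit_path_def rhook_def rhook_len_def)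

lemma rhook_inside:
  "s < n \<Longrightarrow> n \<le> m \<Longrightarrow> u < rhook_len m n s \<Longrightarrow> rhook m s u = (x, y) \<Longrightarrow>
   x < m \<and> y < n \<and> rhook_level m x y = s"
  by (auto simp: rhook_def rhook_len_def rhook_level_def split: if_splits)

lemma rhook_ends:
  "s < n \<Longrightarrow> n \<le> m \<Longrightarrow>
   0 < rhook_len m n s \<and> rhook m s 0 = (0, s) \<and> rhook m s (rhook_len m n s - 1) = (m - 1 - s, n - 1)"
  by (auto simp: rhook_def rhook_len_def)

lemma rhook_covers:
  assumes "n \<le> m" "x < m" "y < n"
  shows "\<exists>u < rhook_len m n (rhook_level m x y). rhook m (rhook_level m x y) u = (x, y)"
proof (cases "y \<le> m - 1 - x")
  case True
  then show ?thesis using assms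
    by (intro exI[of _ x]) (auto simp: rhook_def rhook_len_def rhook_level_def)
next
  case False
  then show ?thesis using assms
    by (intro exI[of _ "m - (m - 1 - x) + (y - (m - 1 - x) - 1)"])
      (auto simp: rhook_def rhook_len_def rhook_level_def)
qed

text \<open>Hook s of the triangle {(x, y). x \<le> y < m}: from (s, s) along y to (s, m-1-s), then
  along x to (m-1-s, m-1-s).  The point (x, y) lies on hook thook_level m x y.\<close>
definition thook :: "nat \<Rightarrow> nat \<Rightarrow> nat \<Rightarrow> nat \<times> nat" where
  "thook m s u = (if u < m - 2 * s then (s, s + u) else (u - (m - 2 * s) + s + 1, m - 1 - s))"

definition thook_len :: "nat \<Rightarrow> nat \<Rightarrow> nat" where
  "thook_len m s = 2 * m - 1 - 4 * s"

definition thook_level :: "nat \<Rightarrow> nat \<Rightarrow> nat \<Rightarrow> nat" where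
  "thook_level m x y = min x (m - 1 - y)"

lemma thook_unit_path: "2 * s < m \<Longrightarrow> unit_path (thook_len m s) (thook m s)"
  by (auto simp: unit_path_def thook_def thook_len_def)

lemma thook_inside:
  "2 * s < m \<Longrightarrow> u < thook_len m s \<Longrightarrow> thook m s u = (x, y) \<Longrightarrow>
   x \<le> y \<and> y < m \<and> thook_level m x y = s"
  by (auto simp: thook_def thook_len_def thook_level_def split: if_splits)

lemma thook_ends:
  "2 * s < m \<Longrightarrow>
   0 < thook_len m s \<and> thook m s 0 = (s, s) \<and> thook m s (thook_len m s - 1) = (m - 1 - s, m - 1 - s)"
  by (auto simp: thook_def thook_len_def)

lemma thook_covers:
  assumes "x \<le> y" "y < m"
  shows "2 * thook_level m x y < m \<and>
         (\<exists>u < thook_len m (thook_level m x y). thook m (thook_level m x y) u = (x, y))"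
proof (cases "x \<le> m - 1 - y")
  case True
  then show ?thesis using assms
    by (intro conjI exI[of _ "y - x"]) (auto simp: thook_def thook_len_def thook_level_def)
next
  case False
  define s where "s = m - 1 - y"
  have s: "thook_level m x y = s" "s < x" "y = m - 1 - s" "2 * s < m"
    using False assms by (auto simp: thook_level_def s_def)
  have "m - 2 * s + (x - s - 1) < thook_len m s \<and> thook m s (m - 2 * s + (x - s - 1)) = (x, y)"
    using s assms by (auto simp: thook_def thook_len_def)
  then show ?thesis using s by blast
qed

section \<open>The quotient by the reversal\<close>

lemma act_id: "act id x = x"
  by (rule nth_equalityI) (auto simp: act_def)

lemma act_rho: assumes "length x = n" shows "act (rho n) x = rev x"
proof (rule nth_equalityI)
  show "length (act (rho n) x) = length (rev x)" by (simp add: act_def)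
next
  fix i assume "i < length (act (rho n) x)"
  then have i: "i < n" using assms by (simp add: act_def)
  have "(\<exists>j<n. x ! j \<and> rho n j = i) \<longleftrightarrow> x ! (n - 1 - i)"
    using i by (auto simp: rho_def intro!: exI[of _ "n - 1 - i"])
  then show "act (rho n) x ! i = rev x ! i" using i assms by (simp add: act_def rev_nth)
qed

lemma quot_Gk: "quot (2 * k) (Gk k) = (\<lambda>x. {x, rev x}) ` Bk (2 * k)"
  unfolding quot_def orbit_def Gk_def
  by (intro image_cong refl) (auto simp: act_id act_rho Bk_def)

lemma pair_orbit_bij:
  assumes lens: "\<And>b b'. (b, b') \<in> P \<Longrightarrow> length b = k \<and> length b' = k"
    and total: "\<And>b b'. length b = k \<Longrightarrow> length b' = k \<Longrightarrow> (b, b') \<in> P \<or> (b', b) \<in> P"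
    and antisym: "\<And>b b'. (b, b') \<in> P \<Longrightarrow> (b', b) \<in> P \<Longrightarrow> b = b'"
  shows "bij_betw (\<lambda>(b, b'). {b @ rev b', b' @ rev b}) P ((\<lambda>x. {x, rev x}) ` Bk (2 * k))"
  unfolding bij_betw_def
proof
  show "inj_on (\<lambda>(b, b'). {b @ rev b', b' @ rev b}) P"
  proof (rule inj_onI, clarify)
    fix b b' c c' assume p: "(b, b') \<in> P" and q: "(c, c') \<in> P"
      and eq: "{b @ rev b', b' @ rev b} = {c @ rev c', c' @ rev c}"
    have l: "length b = k" "length b' = k" "length c = k" "length c' = k" using lens p q by auto
    have "c @ rev c' = b @ rev b' \<or> c @ rev c' = b' @ rev b" using eq by (auto simp: doubleton_eq_iff)
    then have "(c, c') = (b, b') \<or> (c, c') = (b', b)" using l by (auto simp: append_eq_append_conv)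
    then show "b = c \<and> b' = c'" using antisym p q by auto
  qed
next
  show "(\<lambda>(b, b'). {b @ rev b', b' @ rev b}) ` P = (\<lambda>x. {x, rev x}) ` Bk (2 * k)"
  proof (intro equalityI subsetI)
    fix z assume "z \<in> (\<lambda>(b, b'). {b @ rev b', b' @ rev b}) ` P"
    then obtain b b' where "(b, b') \<in> P" "z = {b @ rev b', b' @ rev b}" by auto
    then show "z \<in> (\<lambda>x. {x, rev x}) ` Bk (2 * k)"
      using lens by (intro image_eqI[of _ _ "b @ rev b'"]) (auto simp: Bk_def)
  next
    fix z assume "z \<in> (\<lambda>x. {x, rev x}) ` Bk (2 * k)"
    then obtain x where x: "length x = 2 * k" "z = {x, rev x}" by (auto simp: Bk_def)
    define b b' where "b = take k x" and "b' = rev (drop k x)"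
    have "x = b @ rev b'" by (simp add: b_def b'_def)
    then have z: "z = {b @ rev b', b' @ rev b}" using x by auto
    have "length b = k" "length b' = k" using x by (auto simp: b_def b'_def)
    then have "(b, b') \<in> P \<or> (b', b) \<in> P" by (rule total)
    then show "z \<in> (\<lambda>(b, b'). {b @ rev b', b' @ rev b}) ` P"
      using z by (auto intro: image_eqI[of _ _ "(b, b')"] image_eqI[of _ _ "(b', b)"])
  qed
qed

lemma list_partition:
  assumes "finite I" and dist: "\<And>c. c \<in> I \<Longrightarrow> distinct (f c)"
    and cover: "\<And>p. p \<in> S \<Longrightarrow> \<exists>c\<in>I. p \<in> set (f c)"
    and disj: "\<And>c c' p. c \<in> I \<Longrightarrow> c' \<in> I \<Longrightarrow> p \<in> set (f c) \<Longrightarrow> p \<in> set (f c') \<Longrightarrow> c = c'"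
  shows "\<exists>Ds. set Ds = f ` I \<and> (\<forall>p\<in>S. \<exists>!(i, j). i < length Ds \<and> j < length (Ds ! i) \<and> Ds ! i ! j = p)"
proof -
  obtain ids where ids: "set ids = I" "distinct ids" using finite_distinct_list[OF \<open>finite I\<close>] by blast
  define Ds where "Ds = map f ids"
  have "\<exists>!(i, j). i < length Ds \<and> j < length (Ds ! i) \<and> Ds ! i ! j = p" if p: "p \<in> S" for p
  proof -
    obtain c where c: "c \<in> I" "p \<in> set (f c)" using cover[OF p] by blast
    obtain a where a: "a < length ids" "ids ! a = c" using c ids by (metis in_set_conv_nth)
    obtain b where b: "b < length (f c)" "f c ! b = p" using c by (metis in_set_conv_nth)
    show ?thesis
    proof (rule ex1I[of _ "(a, b)"])
      show "case (a, b) of (i, j) \<Rightarrow> i < length Ds \<and> j < length (Ds ! i) \<and> Ds ! i ! j = p"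
        using a b by (simp add: Ds_def)
    next
      fix y assume y: "case y of (i, j) \<Rightarrow> i < length Ds \<and> j < length (Ds ! i) \<and> Ds ! i ! j = p"
      obtain a' b' where y_eq: "y = (a', b')" by (cases y)
      have a': "a' < length ids" "b' < length (f (ids ! a'))" "f (ids ! a') ! b' = p"
        using y y_eq by (auto simp: Ds_def)
      then have "ids ! a' = c" using disj[of "ids ! a'" c p] c ids by (metis nth_mem)
      then show "y = (a, b)"
        using y_eq a a' b ids dist[OF c(1)] by (metis nth_eq_iff_index_eq)
    qed
  qed
  moreover have "set Ds = f ` I" using ids by (simp add: Ds_def)
  ultimately show ?thesis by blast
qed

locale ordered_scd =
  fixes k :: nat and Cs :: "bool list list list"
  assumes scd: "is_scd k Cs"
    and sorted: "sorted_wrt (\<ge>) (map length Cs)"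
begin

lemma chain_sym: "i < length Cs \<Longrightarrow> sym_chain k (Cs ! i)"
  using scd by (auto simp: is_scd_def)

lemma chain_sat: "i < length Cs \<Longrightarrow> sat_chain k (Cs ! i)"
  using chain_sym by (simp add: sym_chain_def)

lemma chain_length_mono: "i < j \<Longrightarrow> j < length Cs \<Longrightarrow> length (Cs ! j) \<le> length (Cs ! i)"
  using sorted by (auto simp: sorted_wrt_iff_nth_less)

lemma position_unique:
  assumes "i < length Cs" "x < length (Cs ! i)" "i' < length Cs" "x' < length (Cs ! i')"
    and "Cs ! i ! x = Cs ! i' ! x'"
  shows "i = i' \<and> x = x'"
proof -
  have "Cs ! i ! x \<in> Bk k" using assms sat_chain_length[OF chain_sat] by (simp add: Bk_def)
  then have "\<exists>!(a, b). a < length Cs \<and> b < length (Cs ! a) \<and> Cs ! a ! b = Cs ! i ! x"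
    using scd by (auto simp: is_scd_def)
  then show ?thesis using assms by (metis (mono_tags, lifting) case_prodI prod.inject)
qed

lemma position_exists:
  assumes "length b = k" shows "\<exists>i x. i < length Cs \<and> x < length (Cs ! i) \<and> Cs ! i ! x = b"
proof -
  have "b \<in> Bk k" using assms by (simp add: Bk_def)
  then have "\<exists>!(i, x). i < length Cs \<and> x < length (Cs ! i) \<and> Cs ! i ! x = b"
    using scd by (simp add: is_scd_def)
  then show ?thesis by auto
qed

lemma chain_subs_iff:
  assumes "i < length Cs" "x < length (Cs ! i)" "y < length (Cs ! i)"
  shows "subs (Cs ! i ! x) (Cs ! i ! y) \<longleftrightarrow> x \<le> y"
  using assms subs_wt sat_chain_subs[OF chain_sat] sat_chain_wt[OF chain_sat] by fastforce

definition ppos :: "nat \<Rightarrow> nat \<Rightarrow> nat \<Rightarrow> nat \<Rightarrow> bool" where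
  "ppos i j x y \<longleftrightarrow> j < length Cs \<and> x < length (Cs ! i) \<and> y < length (Cs ! j) \<and> (i < j \<or> i = j \<and> x \<le> y)"

lemma ppos_first: "ppos i j x y \<Longrightarrow> i < length Cs"
  by (auto simp: ppos_def)

lemma Pset_iff: "p \<in> Pset Cs \<longleftrightarrow> (\<exists>i j x y. ppos i j x y \<and> p = (Cs ! i ! x, Cs ! j ! y))"
proof -
  have block: "p \<in> Pblock Cs i j \<longleftrightarrow> (\<exists>x y. ppos i j x y \<and> p = (Cs ! i ! x, Cs ! j ! y))"
    if "i \<le> j" "j < length Cs" for i j
  proof (cases "i < j")
    case True then show ?thesis using that by (fastforce simp: Pblock_def ppos_def in_set_conv_nth)
  next
    case False
    then have "i = j" using that by simp
    then show ?thesis using that chain_subs_iff[of i] by (auto simp: Pblock_def ppos_def in_set_conv_nth)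
  qed
  show ?thesis
  proof
    assume "p \<in> Pset Cs"
    then obtain i j where "i \<le> j" "j < length Cs" "p \<in> Pblock Cs i j" by (auto simp: Pset_def)
    then show "\<exists>i j x y. ppos i j x y \<and> p = (Cs ! i ! x, Cs ! j ! y)" using block by blast
  next
    assume "\<exists>i j x y. ppos i j x y \<and> p = (Cs ! i ! x, Cs ! j ! y)"
    then obtain i j x y where pos: "ppos i j x y" "p = (Cs ! i ! x, Cs ! j ! y)" by blast
    then have ij: "i \<le> j" "j < length Cs" by (auto simp: ppos_def)
    then have "p \<in> Pblock Cs i j" using block pos by blast
    then show "p \<in> Pset Cs" unfolding Pset_def using ij by (intro UN_I[of j] UN_I[of i]) auto
  qed
qed

lemma Pset_lengths: "(b, b') \<in> Pset Cs \<Longrightarrow> length b = k \<and> length b' = k"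
  using sat_chain_length[OF chain_sat] by (auto simp: Pset_iff ppos_def)

lemma Pset_total: "length b = k \<Longrightarrow> length b' = k \<Longrightarrow> (b, b') \<in> Pset Cs \<or> (b', b) \<in> Pset Cs"
proof -
  assume "length b = k" "length b' = k"
  then obtain i x j y where "i < length Cs" "x < length (Cs ! i)" "Cs ! i ! x = b"
    "j < length Cs" "y < length (Cs ! j)" "Cs ! j ! y = b'" using position_exists by metis
  then have "ppos i j x y \<or> ppos j i y x" by (auto simp: ppos_def)
  then show ?thesis using \<open>Cs ! i ! x = b\<close> \<open>Cs ! j ! y = b'\<close> Pset_iff by blast
qed

lemma Pset_antisym:
  assumes "(b, b') \<in> Pset Cs" "(b', b) \<in> Pset Cs" shows "b = b'"
proof -
  obtain i j x y where p: "ppos i j x y" "b = Cs ! i ! x" "b' = Cs ! j ! y"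
    using assms(1) Pset_iff by blast
  obtain i' j' x' y' where q: "ppos i' j' x' y'" "b' = Cs ! i' ! x'" "b = Cs ! j' ! y'"
    using assms(2) Pset_iff by blast
  have "i = j' \<and> x = y'" using p q position_unique[of i x j' y'] ppos_first by (auto simp: ppos_def)
  moreover have "j = i' \<and> y = x'" using p q position_unique[of j y i' x'] ppos_first by (auto simp: ppos_def)
  ultimately show ?thesis using p q by (auto simp: ppos_def)
qed

lemma Pset_bij: "bij_betw (\<lambda>(b, b'). {b @ rev b', b' @ rev b}) (Pset Cs) (quot (2 * k) (Gk k))"
  unfolding quot_Gk using Pset_lengths Pset_total Pset_antisym by (rule pair_orbit_bij)

text \<open>The chains of P are indexed by triples (i, j, s): hook s of the rectangle of positions
  C_i x C_j when i < j, hook s of the triangle of C_i x C_i when i = j.\<close>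
definition chain_ids :: "(nat \<times> nat \<times> nat) set" where
  "chain_ids = {(i, j, s). i < j \<and> j < length Cs \<and> s < length (Cs ! j)} \<union>
               {(i, j, s). i = j \<and> i < length Cs \<and> 2 * s < length (Cs ! i)}"

definition path :: "nat \<Rightarrow> nat \<Rightarrow> nat \<Rightarrow> nat \<Rightarrow> nat \<times> nat" where
  "path i j s = (if i < j then rhook (length (Cs ! i)) s else thook (length (Cs ! i)) s)"

definition path_len :: "nat \<Rightarrow> nat \<Rightarrow> nat \<Rightarrow> nat" where
  "path_len i j s = (if i < j then rhook_len (length (Cs ! i)) (length (Cs ! j)) s
                     else thook_len (length (Cs ! i)) s)"

definition level :: "nat \<Rightarrow> nat \<Rightarrow> nat \<Rightarrow> nat \<Rightarrow> nat" where
  "level i j x y = (if i < j then rhook_level (length (Cs ! i)) x y else thook_level (length (Cs ! i)) x y)"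

definition chain_of :: "nat \<times> nat \<times> nat \<Rightarrow> (bool list \<times> bool list) list" where
  "chain_of c = (case c of (i, j, s) \<Rightarrow>
     map (\<lambda>u. (Cs ! i ! fst (path i j s u), Cs ! j ! snd (path i j s u))) [0..<path_len i j s])"

lemma chain_ids_finite: "finite chain_ids"
proof -
  have "length (Cs ! i) \<le> Suc k" if "i < length Cs" for i
    using sym_chain_bottom[OF chain_sym[OF that]] by linarith
  then have "chain_ids \<subseteq> {..<length Cs} \<times> {..<length Cs} \<times> {..<Suc k}"
    unfolding chain_ids_def by fastforce
  then show ?thesis by (rule finite_subset) auto
qed

lemma path_shape:
  assumes "(i, j, s) \<in> chain_ids"
  shows "0 < path_len i j s \<and> unit_path (path_len i j s) (path i j s) \<and>
    fst (path i j s 0) + snd (path i j s 0) + fst (path i j s (path_len i j s - 1))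
      + snd (path i j s (path_len i j s - 1)) + 2 = length (Cs ! i) + length (Cs ! j)"
proof (cases "i < j")
  case True
  then have "s < length (Cs ! j)" "length (Cs ! j) \<le> length (Cs ! i)"
    using assms chain_length_mono by (auto simp: chain_ids_def)
  then show ?thesis using True rhook_ends rhook_unit_path by (simp add: path_def path_len_def)
next
  case False
  then have "2 * s < length (Cs ! i)" "i = j" using assms by (auto simp: chain_ids_def)
  then show ?thesis using False thook_ends thook_unit_path by (simp add: path_def path_len_def)
qed

lemma path_inside:
  assumes c: "(i, j, s) \<in> chain_ids" and u: "u < path_len i j s" and xy: "path i j s u = (x, y)"
  shows "ppos i j x y \<and> level i j x y = s"
proof (cases "i < j")
  case True
  have "s < length (Cs ! j)" "length (Cs ! j) \<le> length (Cs ! i)" "j < length Cs"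
    using c True chain_length_mono by (auto simp: chain_ids_def)
  moreover have "u < rhook_len (length (Cs ! i)) (length (Cs ! j)) s"
    "rhook (length (Cs ! i)) s u = (x, y)" using True u xy by (simp_all add: path_def path_len_def)
  ultimately have "x < length (Cs ! i) \<and> y < length (Cs ! j) \<and> rhook_level (length (Cs ! i)) x y = s"
    using rhook_inside by blast
  then show ?thesis using True \<open>j < length Cs\<close> by (simp add: ppos_def level_def)
next
  case False
  have "2 * s < length (Cs ! i)" "i = j" "i < length Cs" using c False by (auto simp: chain_ids_def)
  moreover have "u < thook_len (length (Cs ! i)) s" "thook (length (Cs ! i)) s u = (x, y)"
    using False u xy by (simp_all add: path_def path_len_def)
  ultimately have "x \<le> y \<and> y < length (Cs ! i) \<and> thook_level (length (Cs ! i)) x y = s"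
    using thook_inside by blast
  then show ?thesis using \<open>i = j\<close> \<open>i < length Cs\<close> by (simp add: ppos_def level_def)
qed

lemma path_covers:
  assumes "ppos i j x y"
  shows "(i, j, level i j x y) \<in> chain_ids \<and>
    (\<exists>u < path_len i j (level i j x y). path i j (level i j x y) u = (x, y))"
proof (cases "i < j")
  case True
  have "length (Cs ! j) \<le> length (Cs ! i)" using True assms chain_length_mono by (auto simp: ppos_def)
  then show ?thesis using True assms rhook_covers[of "length (Cs ! j)" "length (Cs ! i)" x y]
    by (auto simp: ppos_def level_def path_def path_len_def chain_ids_def rhook_level_def)
next
  case False
  then have "i = j" "x \<le> y" "y < length (Cs ! i)" "i < length Cs" using assms by (auto simp: ppos_def)
  then show ?thesis using False thook_covers[of x y "length (Cs ! i)"]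
    by (auto simp: level_def path_def path_len_def chain_ids_def)
qed

lemma chain_of_sym:
  assumes c: "(i, j, s) \<in> chain_ids"
  shows "sym_chain (2 * k) (map emb (chain_of (i, j, s)))"
proof -
  have ij: "i < length Cs" "j < length Cs" using c by (auto simp: chain_ids_def)
  have inside: "fst (path i j s u) < length (Cs ! i) \<and> snd (path i j s u) < length (Cs ! j)"
    if "u < path_len i j s" for u
    using path_inside[OF c that, of "fst (path i j s u)" "snd (path i j s u)"] by (simp add: ppos_def)
  have "sym_chain (k + k)
      (map (\<lambda>u. emb (Cs ! i ! fst (path i j s u), Cs ! j ! snd (path i j s u))) [0..<path_len i j s])"
    using path_shape[OF c] by (intro sym_chain_along_path chain_sym ij inside) auto
  then show ?thesis by (simp add: chain_of_def mult_2 comp_def)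
qed

lemma chain_of_mem:
  assumes "(i, j, s) \<in> chain_ids" "p \<in> set (chain_of (i, j, s))"
  shows "\<exists>x y. ppos i j x y \<and> level i j x y = s \<and> p = (Cs ! i ! x, Cs ! j ! y)"
  using assms path_inside[OF assms(1)] by (force simp: chain_of_def)

lemma chain_of_cover:
  assumes "ppos i j x y"
  shows "(Cs ! i ! x, Cs ! j ! y) \<in> set (chain_of (i, j, level i j x y))"
  using path_covers[OF assms] by (force simp: chain_of_def)

lemma chain_partition:
  "\<exists>Ds :: (bool list \<times> bool list) list list.
     (\<forall>D\<in>set Ds. sym_chain (2 * k) (map emb D) \<and> set D \<subseteq> Pset Cs) \<and>
     (\<forall>p\<in>Pset Cs. \<exists>!(i, j). i < length Ds \<and> j < length (Ds ! i) \<and> Ds ! i ! j = p)"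
proof -
  have sym: "sym_chain (2 * k) (map emb (chain_of c))" if "c \<in> chain_ids" for c
    using that chain_of_sym by (cases c) simp
  have distinct: "distinct (chain_of c)" if "c \<in> chain_ids" for c
    using sym[OF that] sat_chain_distinct distinct_map by (auto simp: sym_chain_def)
  have cover: "\<exists>c\<in>chain_ids. p \<in> set (chain_of c)" if p: "p \<in> Pset Cs" for p
  proof -
    obtain i j x y where "ppos i j x y" "p = (Cs ! i ! x, Cs ! j ! y)" using p Pset_iff by blast
    then show ?thesis using chain_of_cover path_covers by blast
  qed
  have disjoint: "c = c'" if ids: "c \<in> chain_ids" "c' \<in> chain_ids"
    and mem: "p \<in> set (chain_of c)" "p \<in> set (chain_of c')" for c c' p
  proof -
    obtain i j s i' j' s' where c: "c = (i, j, s)" "c' = (i', j', s')" by (cases c, cases c')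
    obtain x y where xy: "ppos i j x y" "level i j x y = s" "p = (Cs ! i ! x, Cs ! j ! y)"
      using chain_of_mem ids(1) mem(1) unfolding c by blast
    obtain x' y' where xy': "ppos i' j' x' y'" "level i' j' x' y' = s'" "p = (Cs ! i' ! x', Cs ! j' ! y')"
      using chain_of_mem ids(2) mem(2) unfolding c by blast
    have "i = i' \<and> x = x'" using position_unique[of i x i' x'] xy xy' ppos_first by (auto simp: ppos_def)
    moreover have "j = j' \<and> y = y'" using position_unique[of j y j' y'] xy xy' by (auto simp: ppos_def)
    ultimately show ?thesis using c xy xy' by simp
  qed
  have in_P: "set (chain_of c) \<subseteq> Pset Cs" if c: "c \<in> chain_ids" for c
  proof
    fix p assume p: "p \<in> set (chain_of c)"
    obtain i j s where "c = (i, j, s)" by (cases c)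
    then have "(i, j, s) \<in> chain_ids" "p \<in> set (chain_of (i, j, s))" using c p by simp_all
    then obtain x y where "ppos i j x y" "p = (Cs ! i ! x, Cs ! j ! y)"
      using chain_of_mem by blast
    then show "p \<in> Pset Cs" unfolding Pset_iff by blast
  qed
  have "\<exists>Ds. set Ds = chain_of ` chain_ids \<and>
      (\<forall>p\<in>Pset Cs. \<exists>!(i, j). i < length Ds \<and> j < length (Ds ! i) \<and> Ds ! i ! j = p)"
    by (rule list_partition) (fact chain_ids_finite distinct cover disjoint)+
  then obtain Ds where Ds: "set Ds = chain_of ` chain_ids"
    "\<forall>p\<in>Pset Cs. \<exists>!(i, j). i < length Ds \<and> j < length (Ds ! i) \<and> Ds ! i ! j = p"
    by (elim exE conjE)
  show ?thesis
  proof (intro exI[of _ Ds] conjI)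
    show "\<forall>D\<in>set Ds. sym_chain (2 * k) (map emb D) \<and> set D \<subseteq> Pset Cs"
      unfolding Ds(1) using sym in_P by blast
  qed (fact Ds(2))
qed

end

theorem mainTheorem9:
  fixes k :: nat and Cs :: "bool list list list"
  assumes "k \<ge> 1"
    and "is_scd k Cs"
    and "sorted_wrt (\<ge>) (map length Cs)"
  shows "(\<exists>Ds :: (bool list \<times> bool list) list list.
            (\<forall>D\<in>set Ds. sym_chain (2 * k) (map emb D) \<and> set D \<subseteq> Pset Cs) \<and>
            (\<forall>p\<in>Pset Cs. \<exists>!(i, j). i < length Ds \<and> j < length (Ds ! i) \<and> Ds ! i ! j = p))
       \<and> bij_betw (\<lambda>(b, b'). {b @ rev b', b' @ rev b}) (Pset Cs) (quot (2 * k) (Gk k))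
       \<and> (\<forall>p\<in>Pset Cs. \<forall>q\<in>Pset Cs. subs (emb p) (emb q) \<longrightarrow>
            orb_le ((\<lambda>(b, b'). {b @ rev b', b' @ rev b}) p) ((\<lambda>(b, b'). {b @ rev b', b' @ rev b}) q))"
proof -
  interpret ordered_scd k Cs using assms(2,3) by unfold_locales
  txt \<open>Inclusion of representatives is exactly what orb_le asks for.\<close>
  have order: "\<forall>p\<in>Pset Cs. \<forall>q\<in>Pset Cs. subs (emb p) (emb q) \<longrightarrow>
      orb_le ((\<lambda>(b, b'). {b @ rev b', b' @ rev b}) p) ((\<lambda>(b, b'). {b @ rev b', b' @ rev b}) q)"
    unfolding orb_le_def emb_def by auto
  show ?thesis by (intro conjI chain_partition Pset_bij order)
qed

end
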